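(* Let $V$ be a reflexive Banach space, $X$ a Banach space, $\gamma\in\mathcal{L}(V,X)$ with $c_\gamma:=\|\gamma\|_{\mathcal{L}(V,X)}$ and adjoint $\gamma^*\colon X^*\to V^*$. Let $A\colon V\to V^*$, $J\colon X\times X\to\mathbb{R}$ and $f\in V^*$ satisfy: (A1) $A$ is linear and bounded; (A2) $\langle Au,v\rangle_{V^*\times V}=\langle Av,u\rangle_{V^*\times V}$ for all $u,v\in V$; (A3) there is $m_A>0$ with $\langle Au,u\rangle_{V^*\times V}\ge m_A\|u\|_V^2$ for all $u\in V$; (J1) $J$ is locally Lipschitz continuous with respect to its second variable; (J2) there exist $c_0,c_1,c_2\ge 0$ with $\|\partial_2 J(w,v)\|_{X^*}\le c_0+c_1\|v\|_X+c_2\|w\|_X$ for all $w,v\in X$; (J3) there exist $m_\alpha,m_L\ge0$ such that $J_2^0(w_1,v_1;v_2-v_1)+J_2^0(w_2,v_2;v_1-v_2)\le m_\alpha\|v_1-v_2\|_X^2+m_L\|w_1-w_2\|_X\|v_1-v_2\|_X$ for all $w_1,w_2,v_1,v_2\in X$; (S) $m_A>(m_\alpha+m_L)c_\gamma^2$. Define $\mathcal{L}\colon V\times V\to\mathbb{R}$ by $\mathcal{L}(w,v)=\tfrac12\langle Av,v\rangle_{V^*\times V}-\langle f,v\rangle_{V^*\times V}+J(\gamma w,\gamma v)$. Then: (i) $\mathcal{L}(w,\cdot)$ is locally Lipschitz continuous for all $w\in V$; (ii) $\partial_2\mathcal{L}(w,v)\subseteq Av-f+\gamma^*\partial_2J(\gamma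 w,\gamma v)$ for all $w,v\in V$; (iii) $\mathcal{L}(w,\cdot)$ is strictly convex for all $w\in V$.
   Context: For a locally Lipschitz function $g$ on a Banach space $Y$, the generalized (Clarke) directional derivative at $x$ in direction $v$ is $g^0(x;v)=\limsup_{y\to x,\lambda\searrow0}\frac{g(y+\lambda v)-g(y)}{\lambda}$, and the Clarke subdifferential is $\partial g(x)=\{\xi\in Y^*:\langle\xi,v\rangle\le g^0(x;v)\ \forall v\in Y\}$. For a function of two variables, $\partial_2$ and $(\cdot)_2^0$ denote the Clarke subdifferential and generalized directional derivative with respect to the second variable. $\|\partial_2J(w,v)\|_{X^*}$ denotes $\sup\{\|\xi\|_{X^*}:\xi\in\partial_2J(w,v)\}$. *)

theory Defs
  imports "HOL-Analysis.Analysis" "HOL-Library.Liminf_Limsup"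
begin

definition reflexive_space :: "'v::real_normed_vector itself \<Rightarrow> bool" where
  "reflexive_space TYPE('v) \<longleftrightarrow>
     (\<forall>\<Phi> :: ('v \<Rightarrow>\<^sub>L real) \<Rightarrow>\<^sub>L real. \<exists>v::'v. \<forall>\<xi>. blinfun_apply \<Phi> \<xi> = blinfun_apply \<xi> v)"

definition loc_lipschitz :: "('a::metric_space \<Rightarrow> real) \<Rightarrow> bool" where
  "loc_lipschitz g \<longleftrightarrow>
     (\<forall>x. \<exists>e>0. \<exists>L. \<forall>y\<in>ball x e. \<forall>z\<in>ball x e. \<bar>g y - g z\<bar> \<le> L * dist y z)"

definition clarke_dd :: "('a::real_normed_vector \<Rightarrow> real) \<Rightarrow> 'a \<Rightarrow> 'a \<Rightarrow> ereal" where
  "clarke_dd g x v =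
     Limsup (nhds x \<times>\<^sub>F at_right (0::real))
       (\<lambda>(y, t). ereal ((g (y + t *\<^sub>R v) - g y) / t))"

definition clarke_subdiff :: "('a::real_normed_vector \<Rightarrow> real) \<Rightarrow> 'a \<Rightarrow> ('a \<Rightarrow>\<^sub>L real) set" where
  "clarke_subdiff g x = {\<xi>. \<forall>v. ereal (blinfun_apply \<xi> v) \<le> clarke_dd g x v}"

definition strictly_convex :: "('a::real_vector \<Rightarrow> real) \<Rightarrow> bool" where
  "strictly_convex g \<longleftrightarrow>
     (\<forall>x y t. x \<noteq> y \<and> 0 < t \<and> t < 1 \<longrightarrow>
        g ((1 - t) *\<^sub>R x + t *\<^sub>R y) < (1 - t) * g x + t * g y)"

end

(*
  Parts (i) and (ii) are Clarke calculus.  The quadratic part q v = 1/2 <A v, v> - <f, v> is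
  strictly differentiable, so the generalized directional derivative of L(w, .) at v in the
  direction u is at most <A v - f, u> + p (gamma u), where p = J_2^0(gamma w, gamma v; .) is
  sublinear and bounded by the local Lipschitz constant of J(gamma w, .).  A Clarke subgradient
  zeta of L(w, .) therefore satisfies zeta - (A v - f) <= p o gamma, and the Hahn-Banach theorem
  extends zeta - (A v - f) from the range of gamma to a linear functional xi <= p on X, which is
  then a Clarke subgradient of J(gamma w, .) at gamma v.

  For (iii), (J3) with w1 = w2 makes G = J(gamma w, .) one-sided monotone with constant m_alpha.
  Along a line, the upper right Dini derivative of tau -> G(p + tau d) + m_alpha |d|^2 tau^2 / 2
  at s is then at most its lower right Dini derivative at any t > s, and a continuous function
  of one real variable with this property is convex.  The coercivity of A supplies curvature
  m_A |e|^2 in the direction e, strictly more than the m_alpha |gamma e|^2 spent on G, so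
  L(w, .) is strictly convex.
*)

theory Submission
  imports Defs
begin

lemma loc_lipschitz_iff_lipschitz_on:
  "loc_lipschitz g \<longleftrightarrow> (\<forall>x. \<exists>e>0. \<exists>L. L-lipschitz_on (ball x e) g)"
proof
  assume g: "loc_lipschitz g"
  show "\<forall>x. \<exists>e>0. \<exists>L. L-lipschitz_on (ball x e) g"
  proof
    fix x
    obtain e L where "e > 0" and L: "\<forall>y\<in>ball x e. \<forall>z\<in>ball x e. \<bar>g y - g z\<bar> \<le> L * dist y z"
      using g unfolding loc_lipschitz_def by blast
    have "(max L 0)-lipschitz_on (ball x e) g"
    proof (rule lipschitz_onI)
      fix y z assume "y \<in> ball x e" "z \<in> ball x e"
      then have "\<bar>g y - g z\<bar> \<le> L * dist y z" using L by blast
      also have "\<dots> \<le> max L 0 * dist y z" by (intro mult_right_mono) auto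
      finally show "dist (g y) (g z) \<le> max L 0 * dist y z" by (simp add: dist_real_def)
    qed simp
    then show "\<exists>e>0. \<exists>L. L-lipschitz_on (ball x e) g" using \<open>e > 0\<close> by blast
  qed
qed (fastforce simp: loc_lipschitz_def lipschitz_on_def dist_real_def)

lemma loc_lipschitzE:
  assumes "loc_lipschitz g"
  obtains e L where "e > 0" "L-lipschitz_on (ball x e) g"
  using assms unfolding loc_lipschitz_iff_lipschitz_on by blast

lemma loc_lipschitz_imp_isCont:
  assumes "loc_lipschitz g"
  shows "isCont g x"
proof -
  obtain e L where "e > 0" "L-lipschitz_on (ball x e) g"
    using assms by (rule loc_lipschitzE)
  then show ?thesis
    using lipschitz_on_continuous_on continuous_on_eq_continuous_at[of "ball x e" g] by auto
qed

lemma loc_lipschitz_add: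
  assumes "loc_lipschitz g" "loc_lipschitz h"
  shows "loc_lipschitz (\<lambda>x. g x + h x)"
  unfolding loc_lipschitz_iff_lipschitz_on
proof
  fix x
  obtain e1 L1 e2 L2 where "e1 > 0" "L1-lipschitz_on (ball x e1) g" "e2 > 0" "L2-lipschitz_on (ball x e2) h"
    using assms by (meson loc_lipschitzE)
  then have "(L1 + L2)-lipschitz_on (ball x (min e1 e2)) (\<lambda>x. g x + h x)"
    by (intro lipschitz_on_add) (auto elim: lipschitz_on_subset)
  then show "\<exists>e>0. \<exists>L. L-lipschitz_on (ball x e) (\<lambda>x. g x + h x)"
    using \<open>e1 > 0\<close> \<open>e2 > 0\<close> by (intro exI[of _ "min e1 e2"]) auto
qed

lemma loc_lipschitz_compose_blinfun:
  fixes T :: "'a::real_normed_vector \<Rightarrow>\<^sub>L 'b::real_normed_vector"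
  assumes "loc_lipschitz g"
  shows "loc_lipschitz (\<lambda>y. g (T y))"
  unfolding loc_lipschitz_iff_lipschitz_on
proof
  fix x
  obtain e L where e: "e > 0" and L: "L-lipschitz_on (ball (T x) e) g"
    using assms by (rule loc_lipschitzE)
  have "continuous (at x) (blinfun_apply T)" by (rule continuous_intros)+
  then obtain d where "d > 0" and d: "\<And>y. dist y x < d \<Longrightarrow> dist (T y) (T x) < e"
    using e unfolding continuous_at_eps_delta by blast
  obtain B where "B-lipschitz_on (ball x d) (blinfun_apply T)"
    by (rule bounded_linear.lipschitz_boundE[OF blinfun.bounded_linear_right])
  moreover have "L-lipschitz_on (T ` ball x d) g"
    using L by (rule lipschitz_on_subset) (auto simp: d dist_commute)
  ultimately have "(L * B)-lipschitz_on (ball x d) (\<lambda>y. g (T y))"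
    by (rule lipschitz_on_compose2)
  then show "\<exists>e>0. \<exists>L. L-lipschitz_on (ball x e) (\<lambda>y. g (T y))"
    using \<open>d > 0\<close> by blast
qed

lemma abs_blinfun_bilinear_le:
  fixes A :: "'a::real_normed_vector \<Rightarrow>\<^sub>L ('b::real_normed_vector \<Rightarrow>\<^sub>L real)"
  shows "\<bar>A a b\<bar> \<le> norm A * norm a * norm b"
proof -
  have "\<bar>A a b\<bar> \<le> norm (A a) * norm b" using norm_blinfun[of "A a" b] by simp
  also have "\<dots> \<le> norm A * norm a * norm b" by (intro mult_right_mono norm_blinfun) auto
  finally show ?thesis .
qed

lemma loc_lipschitz_quadratic:
  fixes A :: "'v::real_normed_vector \<Rightarrow>\<^sub>L ('v \<Rightarrow>\<^sub>L real)" and f :: "'v \<Rightarrow>\<^sub>L real"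
  shows "loc_lipschitz (\<lambda>v. 1/2 * A v v - f v)"
  unfolding loc_lipschitz_iff_lipschitz_on
proof
  fix x :: 'v
  define R where "R = norm x + 1"
  have "(norm A * R + norm f)-lipschitz_on (ball x 1) (\<lambda>v. 1/2 * A v v - f v)"
  proof (rule lipschitz_onI)
    fix y z assume "y \<in> ball x 1" "z \<in> ball x 1"
    then have R: "norm y \<le> R" "norm z \<le> R"
      unfolding R_def using norm_triangle_sub[of y x] norm_triangle_sub[of z x]
      by (auto simp: dist_norm norm_minus_commute)
    have differences: "A y (y - z) + A (y - z) z = A y y - A z z" "f (y - z) = f y - f z"
      by (simp_all add: blinfun.bilinear_simps)
    have "\<bar>A y (y - z)\<bar> \<le> norm A * R * norm (y - z)"
      using abs_blinfun_bilinear_le[of A y "y - z"] R(1)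
      by (elim order_trans) (intro mult_right_mono mult_left_mono, auto)
    moreover have "\<bar>A (y - z) z\<bar> \<le> norm A * R * norm (y - z)"
      using abs_blinfun_bilinear_le[of A "y - z" z] mult_left_mono[OF R(2), of "norm A * norm (y - z)"]
      by (simp add: ac_simps)
    moreover have "\<bar>f (y - z)\<bar> \<le> norm f * norm (y - z)"
      using norm_blinfun[of f "y - z"] by simp
    ultimately have "\<bar>1/2 * A y y - f y - (1/2 * A z z - f z)\<bar> \<le> norm A * R * norm (y - z) + norm f * norm (y - z)"
      using differences unfolding abs_le_iff by (elim conjE, intro conjI) linarith+
    then show "dist (1/2 * A y y - f y) (1/2 * A z z - f z) \<le> (norm A * R + norm f) * dist y z"
      by (simp add: dist_real_def dist_norm algebra_simps)
  qed (simp add: R_def)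
  then show "\<exists>e>0. \<exists>L. L-lipschitz_on (ball x e) (\<lambda>v. 1/2 * A v v - f v)"
    using zero_less_one by blast
qed

section \<open>Calculus of the Clarke directional derivative\<close>

abbreviation clarke_filter :: "'a::real_normed_vector \<Rightarrow> ('a \<times> real) filter" where
  "clarke_filter x \<equiv> nhds x \<times>\<^sub>F at_right 0"

lemma clarke_filter_neq_bot: "clarke_filter x \<noteq> bot"
  by (simp add: prod_filter_eq_bot)

lemma tendsto_fst_clarke_filter: "(fst \<longlongrightarrow> x) (clarke_filter x)"
  by (rule filterlim_fst)

lemma tendsto_snd_clarke_filter: "(snd \<longlongrightarrow> 0) (clarke_filter x)"
  by (rule filterlim_mono[OF filterlim_snd at_within_le_nhds order_refl])

lemma eventually_snd_pos_clarke_filter: "\<forall>\<^sub>F z in clarke_filter x. snd z > 0"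
  using filterlim_snd[of "at_right (0::real)" "nhds x"]
  by (auto simp: filterlim_at elim: eventually_mono)

lemma tendsto_shift_clarke_filter: "((\<lambda>(y, t). y + t *\<^sub>R v) \<longlongrightarrow> x) (clarke_filter x)"
proof -
  have "((\<lambda>z. fst z + snd z *\<^sub>R v) \<longlongrightarrow> x + 0 *\<^sub>R v) (clarke_filter x)"
    by (intro tendsto_intros tendsto_fst_clarke_filter tendsto_snd_clarke_filter)
  then show ?thesis by (simp add: case_prod_beta')
qed

lemma clarke_dd_le_iff:
  "clarke_dd g x v \<le> ereal r \<longleftrightarrow>
     (\<forall>e>0. \<forall>\<^sub>F (y, t) in clarke_filter x. (g (y + t *\<^sub>R v) - g y) / t \<le> r + e)"
proof (intro iffI allI impI)
  fix e :: real assume "clarke_dd g x v \<le> ereal r" "e > 0"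
  then have "clarke_dd g x v < ereal (r + e)"
    by (simp add: le_less_trans)
  then have "\<forall>\<^sub>F z in clarke_filter x. (\<lambda>(y, t). ereal ((g (y + t *\<^sub>R v) - g y) / t)) z < ereal (r + e)"
    unfolding clarke_dd_def by (rule Limsup_lessD)
  then show "\<forall>\<^sub>F (y, t) in clarke_filter x. (g (y + t *\<^sub>R v) - g y) / t \<le> r + e"
    by (rule eventually_mono) (simp add: case_prod_beta')
next
  assume bound: "\<forall>e>0. \<forall>\<^sub>F (y, t) in clarke_filter x. (g (y + t *\<^sub>R v) - g y) / t \<le> r + e"
  show "clarke_dd g x v \<le> ereal r"
  proof (rule ereal_le_epsilon2)
    fix e :: real assume "e > 0"
    with bound have "\<forall>\<^sub>F (y, t) in clarke_filter x. (g (y + t *\<^sub>R v) - g y) / t \<le> r + e"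
      by blast
    then have "\<forall>\<^sub>F z in clarke_filter x. (\<lambda>(y, t). ereal ((g (y + t *\<^sub>R v) - g y) / t)) z \<le> ereal r + ereal e"
      by (rule eventually_mono) (simp add: case_prod_beta')
    then show "clarke_dd g x v \<le> ereal r + ereal e"
      unfolding clarke_dd_def by (rule Limsup_bounded)
  qed
qed

lemma clarke_dd_add_direction_le:
  assumes "clarke_dd g x u \<le> ereal a" "clarke_dd g x w \<le> ereal b"
  shows "clarke_dd g x (u + w) \<le> ereal (a + b)"
  unfolding clarke_dd_le_iff
proof (intro allI impI)
  fix e :: real assume "e > 0"
  have shift: "filterlim (\<lambda>(y, t). (y + t *\<^sub>R w, t)) (clarke_filter x) (clarke_filter x)"
    using filterlim_Pair[OF tendsto_shift_clarke_filter filterlim_snd] by (simp add: case_prod_beta')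
  have "\<forall>\<^sub>F (y, t) in clarke_filter x. (g (y + t *\<^sub>R u) - g y) / t \<le> a + e/2"
    using assms(1) \<open>e > 0\<close> by (simp add: clarke_dd_le_iff)
  from eventually_compose_filterlim[OF this shift]
  have "\<forall>\<^sub>F (y, t) in clarke_filter x. (g (y + t *\<^sub>R w + t *\<^sub>R u) - g (y + t *\<^sub>R w)) / t \<le> a + e/2"
    by (simp add: case_prod_beta')
  moreover have "\<forall>\<^sub>F (y, t) in clarke_filter x. (g (y + t *\<^sub>R w) - g y) / t \<le> b + e/2"
    using assms(2) \<open>e > 0\<close> by (simp add: clarke_dd_le_iff)
  ultimately show "\<forall>\<^sub>F (y, t) in clarke_filter x. (g (y + t *\<^sub>R (u + w)) - g y) / t \<le> a + b + e"
  proof eventually_elim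
    case (elim z)
    then show ?case
      by (simp add: case_prod_beta' scaleR_add_right add.assoc add.commute[of "snd z *\<^sub>R u"] diff_divide_distrib)
  qed
qed

lemma clarke_dd_scaleR_le:
  assumes "clarke_dd g x v \<le> ereal r" "c > 0"
  shows "clarke_dd g x (c *\<^sub>R v) \<le> ereal (c * r)"
  unfolding clarke_dd_le_iff
proof (intro allI impI)
  fix e :: real assume "e > 0"
  have "((\<lambda>z. c * snd z) \<longlongrightarrow> c * 0) (clarke_filter x)"
    by (intro tendsto_intros tendsto_snd_clarke_filter)
  moreover have "\<forall>\<^sub>F z in clarke_filter x. c * snd z > 0"
    using eventually_snd_pos_clarke_filter by eventually_elim (simp add: \<open>c > 0\<close>)
  ultimately have "filterlim (\<lambda>z. c * snd z) (at_right 0) (clarke_filter x)"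
    by (simp add: tendsto_imp_filterlim_at_right)
  then have stretch: "filterlim (\<lambda>(y, t). (y, c * t)) (clarke_filter x) (clarke_filter x)"
    using filterlim_Pair[OF tendsto_fst_clarke_filter] by (simp add: case_prod_beta')
  have "\<forall>\<^sub>F (y, t) in clarke_filter x. (g (y + t *\<^sub>R v) - g y) / t \<le> r + e / c"
    using assms \<open>e > 0\<close> by (simp add: clarke_dd_le_iff)
  from eventually_compose_filterlim[OF this stretch]
  show "\<forall>\<^sub>F (y, t) in clarke_filter x. (g (y + t *\<^sub>R c *\<^sub>R v) - g y) / t \<le> c * r + e"
  proof eventually_elim
    case (elim z)
    then have "(g (fst z + (c * snd z) *\<^sub>R v) - g (fst z)) / (c * snd z) \<le> r + e / c"
      by (simp add: case_prod_beta')
    then have "c * ((g (fst z + (c * snd z) *\<^sub>R v) - g (fst z)) / (c * snd z)) \<le> c * r + e"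
      using \<open>c > 0\<close> mult_left_mono[of _ _ c] by (fastforce simp: distrib_left)
    moreover have "c * ((g (fst z + (c * snd z) *\<^sub>R v) - g (fst z)) / (c * snd z))
        = (g (fst z + snd z *\<^sub>R c *\<^sub>R v) - g (fst z)) / snd z"
      using \<open>c > 0\<close> by (simp add: mult.commute)
    ultimately show ?case by (simp add: case_prod_beta')
  qed
qed

lemma clarke_dd_add_le:
  assumes "clarke_dd g x v \<le> ereal a" "clarke_dd h x v \<le> ereal b"
  shows "clarke_dd (\<lambda>y. g y + h y) x v \<le> ereal (a + b)"
  unfolding clarke_dd_le_iff
proof (intro allI impI)
  fix e :: real assume "e > 0"
  then have "\<forall>\<^sub>F (y, t) in clarke_filter x. (g (y + t *\<^sub>R v) - g y) / t \<le> a + e/2"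
    "\<forall>\<^sub>F (y, t) in clarke_filter x. (h (y + t *\<^sub>R v) - h y) / t \<le> b + e/2"
    using assms by (simp_all add: clarke_dd_le_iff)
  then show "\<forall>\<^sub>F (y, t) in clarke_filter x. (g (y + t *\<^sub>R v) + h (y + t *\<^sub>R v) - (g y + h y)) / t \<le> a + b + e"
  proof eventually_elim
    case (elim z)
    moreover have "(g (fst z + snd z *\<^sub>R v) + h (fst z + snd z *\<^sub>R v) - (g (fst z) + h (fst z))) / snd z
        = (g (fst z + snd z *\<^sub>R v) - g (fst z)) / snd z + (h (fst z + snd z *\<^sub>R v) - h (fst z)) / snd z"
      by (simp add: add_divide_distrib[symmetric])
    ultimately show ?case by (simp add: case_prod_beta')
  qed
qed

lemma clarke_dd_compose_blinfun_le:
  fixes T :: "'a::real_normed_vector \<Rightarrow>\<^sub>L 'b::real_normed_vector"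
  assumes "clarke_dd g (T x) (T v) \<le> ereal r"
  shows "clarke_dd (\<lambda>y. g (T y)) x v \<le> ereal r"
  unfolding clarke_dd_le_iff
proof (intro allI impI)
  fix e :: real assume "e > 0"
  have "((\<lambda>z. T (fst z)) \<longlongrightarrow> T x) (clarke_filter x)"
    by (intro tendsto_intros tendsto_fst_clarke_filter)
  then have map: "filterlim (\<lambda>(y, t). (T y, t)) (clarke_filter (T x)) (clarke_filter x)"
    using filterlim_Pair[OF _ filterlim_snd] by (simp add: case_prod_beta')
  have "\<forall>\<^sub>F (y, t) in clarke_filter (T x). (g (y + t *\<^sub>R T v) - g y) / t \<le> r + e"
    using assms \<open>e > 0\<close> by (simp add: clarke_dd_le_iff)
  from eventually_compose_filterlim[OF this map]
  show "\<forall>\<^sub>F (y, t) in clarke_filter x. (g (T (y + t *\<^sub>R v)) - g (T y)) / t \<le> r + e"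
    by (simp add: case_prod_beta' blinfun.add_right blinfun.scaleR_right)
qed

lemma clarke_dd_eq_of_tendsto:
  assumes "((\<lambda>(y, t). (g (y + t *\<^sub>R v) - g y) / t) \<longlongrightarrow> l) (clarke_filter x)"
  shows "clarke_dd g x v = ereal l"
  unfolding clarke_dd_def
proof (rule lim_imp_Limsup)
  show "\<not> trivial_limit (clarke_filter x)" by (rule clarke_filter_neq_bot)
  show "((\<lambda>(y, t). ereal ((g (y + t *\<^sub>R v) - g y) / t)) \<longlongrightarrow> ereal l) (clarke_filter x)"
    using tendsto_ereal[OF assms] by (simp add: case_prod_beta')
qed

lemma clarke_dd_quadratic:
  fixes A :: "'v::real_normed_vector \<Rightarrow>\<^sub>L ('v \<Rightarrow>\<^sub>L real)" and f :: "'v \<Rightarrow>\<^sub>L real"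
  assumes sym: "\<And>u v. A u v = A v u"
  shows "clarke_dd (\<lambda>y. 1/2 * A y y - f y) x u = ereal (A x u - f u)"
proof (rule clarke_dd_eq_of_tendsto)
  let ?q = "\<lambda>y. 1/2 * A y y - f y"
  have expand: "?q (y + t *\<^sub>R u) - ?q y = t * (A y u - f u + t / 2 * A u u)" for y t
    using sym[of u y] by (simp add: blinfun.bilinear_simps algebra_simps)
  have "\<forall>\<^sub>F z in clarke_filter x. A (fst z) u - f u + snd z / 2 * A u u
      = (\<lambda>(y, t). (?q (y + t *\<^sub>R u) - ?q y) / t) z"
    using eventually_snd_pos_clarke_filter
  proof (rule eventually_mono)
    fix z :: "'v \<times> real" assume "snd z > 0"
    then show "A (fst z) u - f u + snd z / 2 * A u u = (\<lambda>(y, t). (?q (y + t *\<^sub>R u) - ?q y) / t) z"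
      unfolding case_prod_beta' expand by simp
  qed
  moreover have "((\<lambda>z. A (fst z) u - f u + snd z / 2 * A u u) \<longlongrightarrow> A x u - f u + 0 / 2 * A u u) (clarke_filter x)"
    by (intro tendsto_intros tendsto_fst_clarke_filter tendsto_snd_clarke_filter) simp
  ultimately show "((\<lambda>(y, t). (?q (y + t *\<^sub>R u) - ?q y) / t) \<longlongrightarrow> A x u - f u) (clarke_filter x)"
    by (auto intro: Lim_transform_eventually)
qed

lemma clarke_dd_lipschitz_bounds:
  assumes "L-lipschitz_on (ball x e) g" "e > 0"
  shows "ereal (- (L * norm v)) \<le> clarke_dd g x v" "clarke_dd g x v \<le> ereal (L * norm v)"
proof -
  have "\<forall>\<^sub>F z in clarke_filter x. dist (fst z) x < e" "\<forall>\<^sub>F z in clarke_filter x. dist ((\<lambda>(y, t). y + t *\<^sub>R v) z) x < e"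
    using tendstoD[OF tendsto_fst_clarke_filter \<open>e > 0\<close>] tendstoD[OF tendsto_shift_clarke_filter \<open>e > 0\<close>] .
  then have "\<forall>\<^sub>F (y, t) in clarke_filter x.
      - (L * norm v) \<le> (g (y + t *\<^sub>R v) - g y) / t \<and> (g (y + t *\<^sub>R v) - g y) / t \<le> L * norm v"
    using eventually_snd_pos_clarke_filter
  proof eventually_elim
    case (elim z)
    then have "fst z + snd z *\<^sub>R v \<in> ball x e" "fst z \<in> ball x e"
      by (simp_all add: case_prod_beta' dist_commute)
    then have "\<bar>g (fst z + snd z *\<^sub>R v) - g (fst z)\<bar> \<le> L * dist (fst z + snd z *\<^sub>R v) (fst z)"
      using lipschitz_onD[OF assms(1)] by (simp add: dist_real_def)
    also have "\<dots> = snd z * (L * norm v)" using elim by (simp add: dist_norm)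
    finally show ?case
      using elim by (simp add: case_prod_beta' abs_le_iff pos_divide_le_eq pos_le_divide_eq mult.commute)
  qed
  then have "\<forall>\<^sub>F z in clarke_filter x. ereal (- (L * norm v)) \<le> (\<lambda>(y, t). ereal ((g (y + t *\<^sub>R v) - g y) / t)) z"
    "\<forall>\<^sub>F z in clarke_filter x. (\<lambda>(y, t). ereal ((g (y + t *\<^sub>R v) - g y) / t)) z \<le> ereal (L * norm v)"
    by (auto elim!: eventually_mono simp: case_prod_beta')
  then show "ereal (- (L * norm v)) \<le> clarke_dd g x v" "clarke_dd g x v \<le> ereal (L * norm v)"
    unfolding clarke_dd_def by (auto intro: le_Limsup[OF clarke_filter_neq_bot] Limsup_bounded)
qed

lemma clarke_dd_real_bounded:
  assumes "loc_lipschitz g"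
  obtains L where "\<And>v. clarke_dd g x v = ereal (real_of_ereal (clarke_dd g x v))"
    "\<And>v. real_of_ereal (clarke_dd g x v) \<le> L * norm v"
proof -
  obtain e L where e: "e > 0" and L: "L-lipschitz_on (ball x e) g"
    using assms by (rule loc_lipschitzE)
  have "clarke_dd g x v = ereal (real_of_ereal (clarke_dd g x v)) \<and> real_of_ereal (clarke_dd g x v) \<le> L * norm v" for v
    using clarke_dd_lipschitz_bounds[OF L e, of v] by (cases "clarke_dd g x v") auto
  then show ?thesis using that by blast
qed

lemma eventually_le_of_clarke_dd_le:
  assumes "clarke_dd g x v \<le> ereal r" "e > 0"
  shows "\<forall>\<^sub>F \<mu> in at_right 0. g (x + \<mu> *\<^sub>R u + \<mu> *\<^sub>R v) - g (x + \<mu> *\<^sub>R u) \<le> (r + e) * \<mu>"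
proof -
  have "((\<lambda>\<mu>. x + \<mu> *\<^sub>R u) \<longlongrightarrow> x + 0 *\<^sub>R u) (at_right 0)"
    by (intro tendsto_intros)
  then have "filterlim (\<lambda>\<mu>. (x + \<mu> *\<^sub>R u, \<mu>)) (clarke_filter x) (at_right 0)"
    using filterlim_Pair[OF _ filterlim_ident] by simp
  from eventually_compose_filterlim[OF assms(1)[unfolded clarke_dd_le_iff, rule_format, OF assms(2)] this]
  have "\<forall>\<^sub>F \<mu> in at_right 0. (g (x + \<mu> *\<^sub>R u + \<mu> *\<^sub>R v) - g (x + \<mu> *\<^sub>R u)) / \<mu> \<le> r + e"
    by simp
  then show ?thesis
    using eventually_at_right_less[of "0::real"]
    by eventually_elim (simp add: pos_divide_le_eq)
qed

section \<open>Hahn--Banach extension under a sublinear bound\<close>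

definition sublinear :: "('a::real_vector \<Rightarrow> real) \<Rightarrow> bool" where
  "sublinear p \<longleftrightarrow> (\<forall>x y. p (x + y) \<le> p x + p y) \<and> (\<forall>c x. c > 0 \<longrightarrow> p (c *\<^sub>R x) \<le> c * p x)"

lemma sublinear_scaleR:
  assumes "sublinear p" "c > 0"
  shows "p (c *\<^sub>R x) = c * p x"
proof -
  have "p x = p (inverse c *\<^sub>R (c *\<^sub>R x))" using \<open>c > 0\<close> by simp
  also have "\<dots> \<le> inverse c * p (c *\<^sub>R x)"
    using assms(1) positive_imp_inverse_positive[OF assms(2)] unfolding sublinear_def by blast
  finally have "c * p x \<le> p (c *\<^sub>R x)" using \<open>c > 0\<close> by (simp add: field_simps)
  then show ?thesis using assms unfolding sublinear_def by (simp add: order_antisym)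
qed

lemma sublinear_zero:
  assumes "sublinear p"
  shows "p 0 = 0"
  using sublinear_scaleR[OF assms, of 2 0] by simp

text \<open>Partial linear functionals dominated by \<open>p\<close> are represented by their graphs, so that
  a chain of extensions is bounded by its union.\<close>

definition dominated_linear_graph :: "('a::real_vector \<Rightarrow> real) \<Rightarrow> ('a \<times> real) set \<Rightarrow> bool" where
  "dominated_linear_graph p G \<longleftrightarrow>
     (\<forall>x a b. (x, a) \<in> G \<longrightarrow> (x, b) \<in> G \<longrightarrow> a = b) \<and>
     (\<forall>x a y b. (x, a) \<in> G \<longrightarrow> (y, b) \<in> G \<longrightarrow> (x + y, a + b) \<in> G) \<and>
     (\<forall>x a c. (x, a) \<in> G \<longrightarrow> (c *\<^sub>R x, c * a) \<in> G) \<and>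
     (\<forall>x a. (x, a) \<in> G \<longrightarrow> a \<le> p x)"

lemma dominated_linear_graphD:
  assumes "dominated_linear_graph p G"
  shows dominated_linear_graph_unique: "\<And>x a b. (x, a) \<in> G \<Longrightarrow> (x, b) \<in> G \<Longrightarrow> a = b"
    and dominated_linear_graph_add: "\<And>x a y b. (x, a) \<in> G \<Longrightarrow> (y, b) \<in> G \<Longrightarrow> (x + y, a + b) \<in> G"
    and dominated_linear_graph_scaleR: "\<And>x a c. (x, a) \<in> G \<Longrightarrow> (c *\<^sub>R x, c * a) \<in> G"
    and dominated_linear_graph_le: "\<And>x a. (x, a) \<in> G \<Longrightarrow> a \<le> p x"
  using assms unfolding dominated_linear_graph_def by blast+

lemma dominated_linear_graph_zero:
  assumes "dominated_linear_graph p G" "(x, a) \<in> G"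
  shows "(0, 0) \<in> G"
  using dominated_linear_graph_scaleR[OF assms, of 0] by simp

lemma dominated_linear_graph_range:
  assumes T: "linear T" and \<eta>: "linear \<eta>" and p: "sublinear p"
    and dominated: "\<And>u. \<eta> u \<le> p (T u)"
  shows "dominated_linear_graph p (range (\<lambda>u. (T u, \<eta> u)))"
  unfolding dominated_linear_graph_def
proof (intro conjI allI impI)
  fix x a b assume "(x, a) \<in> range (\<lambda>u. (T u, \<eta> u))" "(x, b) \<in> range (\<lambda>u. (T u, \<eta> u))"
  then obtain u1 u2 where u: "x = T u1" "a = \<eta> u1" "x = T u2" "b = \<eta> u2" by blast
  then have "T (u1 - u2) = 0" "T (u2 - u1) = 0" by (simp_all add: linear_diff[OF T])
  then have "\<eta> (u1 - u2) \<le> 0" "\<eta> (u2 - u1) \<le> 0"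
    using dominated[of "u1 - u2"] dominated[of "u2 - u1"] sublinear_zero[OF p] by simp_all
  then show "a = b" using u by (simp add: linear_diff[OF \<eta>])
next
  fix x a y b assume "(x, a) \<in> range (\<lambda>u. (T u, \<eta> u))" "(y, b) \<in> range (\<lambda>u. (T u, \<eta> u))"
  then obtain u1 u2 where "x = T u1" "a = \<eta> u1" "y = T u2" "b = \<eta> u2" by auto
  then show "(x + y, a + b) \<in> range (\<lambda>u. (T u, \<eta> u))"
    by (auto simp: linear_add[OF T] linear_add[OF \<eta>] intro!: image_eqI[of _ _ "u1 + u2"])
next
  fix x a c assume "(x, a) \<in> range (\<lambda>u. (T u, \<eta> u))"
  then obtain u where "x = T u" "a = \<eta> u" by auto
  then show "(c *\<^sub>R x, c * a) \<in> range (\<lambda>u. (T u, \<eta> u))"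
    by (auto simp: linear_scale[OF T] linear_scale[OF \<eta>] intro!: image_eqI[of _ _ "c *\<^sub>R u"])
next
  fix x a assume "(x, a) \<in> range (\<lambda>u. (T u, \<eta> u))"
  then show "a \<le> p x" using dominated by auto
qed

lemma dominated_linear_graph_Union:
  assumes "chain_subset C" and C: "\<And>G. G \<in> C \<Longrightarrow> dominated_linear_graph p G"
  shows "dominated_linear_graph p (\<Union>C)"
proof -
  have common: "\<exists>G\<in>C. P \<in> G \<and> Q \<in> G" if "P \<in> \<Union>C" "Q \<in> \<Union>C" for P Q
    using that assms(1) unfolding chain_subset_def by blast
  show ?thesis
    unfolding dominated_linear_graph_def
  proof (intro conjI allI impI)
    fix x a b assume "(x, a) \<in> \<Union>C" "(x, b) \<in> \<Union>C"
    then obtain G where "G \<in> C" "(x, a) \<in> G" "(x, b) \<in> G" using common by blast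
    then show "a = b" using C dominated_linear_graph_unique by blast
  next
    fix x a y b assume "(x, a) \<in> \<Union>C" "(y, b) \<in> \<Union>C"
    then obtain G where "G \<in> C" "(x, a) \<in> G" "(y, b) \<in> G" using common by blast
    then show "(x + y, a + b) \<in> \<Union>C" using C dominated_linear_graph_add by blast
  next
    fix x a c assume "(x, a) \<in> \<Union>C"
    then show "(c *\<^sub>R x, c * a) \<in> \<Union>C" using C dominated_linear_graph_scaleR by blast
  next
    fix x a assume "(x, a) \<in> \<Union>C"
    then show "a \<le> p x" using C dominated_linear_graph_le by blast
  qed
qed

lemma dominated_linear_graph_extension_value:
  assumes p: "sublinear p" and M: "dominated_linear_graph p M" "M \<noteq> {}"
  obtains c where "\<And>y a. (y, a) \<in> M \<Longrightarrow> a - p (y - x0) \<le> c"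
    "\<And>z b. (z, b) \<in> M \<Longrightarrow> c \<le> p (z + x0) - b"
proof -
  have gap: "a - p (y - x0) \<le> p (z + x0) - b" if "(y, a) \<in> M" "(z, b) \<in> M" for y a z b
  proof -
    have "a + b \<le> p (y + z)" using dominated_linear_graph_le[OF M(1) dominated_linear_graph_add[OF M(1) that]] .
    also have "\<dots> = p ((y - x0) + (z + x0))" by (simp add: algebra_simps)
    also have "\<dots> \<le> p (y - x0) + p (z + x0)" using p unfolding sublinear_def by blast
    finally show ?thesis by simp
  qed
  define S where "S = {a - p (y - x0) | y a. (y, a) \<in> M}"
  obtain z b where "(z, b) \<in> M" using M(2) by auto
  then have "S \<noteq> {}" "bdd_above S"
    unfolding S_def bdd_above_def using gap by blast+
  show ?thesis
  proof (rule that[of "Sup S"])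
    show "a - p (y - x0) \<le> Sup S" if "(y, a) \<in> M" for y a
      using that \<open>bdd_above S\<close> unfolding S_def by (intro cSup_upper) auto
    show "Sup S \<le> p (z + x0) - b" if "(z, b) \<in> M" for z b
      using that \<open>S \<noteq> {}\<close> gap unfolding S_def by (intro cSup_least) auto
  qed
qed

lemma dominated_linear_graph_extension_le:
  assumes p: "sublinear p" and M: "dominated_linear_graph p M" and "(y, a) \<in> M"
    and c_lower: "\<And>y a. (y, a) \<in> M \<Longrightarrow> a - p (y - x0) \<le> c"
    and c_upper: "\<And>z b. (z, b) \<in> M \<Longrightarrow> c \<le> p (z + x0) - b"
  shows "a + t * c \<le> p (y + t *\<^sub>R x0)"
proof -
  consider "t = 0" | "t > 0" | "t < 0" by linarith
  then show ?thesis
  proof cases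
    case 1
    then show ?thesis using dominated_linear_graph_le[OF M \<open>(y, a) \<in> M\<close>] by simp
  next
    case 2
    have "c \<le> p (inverse t *\<^sub>R y + x0) - inverse t * a"
      using c_upper[OF dominated_linear_graph_scaleR[OF M \<open>(y, a) \<in> M\<close>]] .
    then have "t * c \<le> t * p (inverse t *\<^sub>R y + x0) - a"
      using 2 by (simp add: field_simps)
    also have "t * p (inverse t *\<^sub>R y + x0) = p (y + t *\<^sub>R x0)"
      using sublinear_scaleR[OF p 2, of "inverse t *\<^sub>R y + x0"] 2 by (simp add: scaleR_add_right)
    finally show ?thesis by simp
  next
    case 3
    have "inverse (- t) * a - p (inverse (- t) *\<^sub>R y - x0) \<le> c"
      using c_lower[OF dominated_linear_graph_scaleR[OF M \<open>(y, a) \<in> M\<close>]] .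
    then have "a - (- t) * p (inverse (- t) *\<^sub>R y - x0) \<le> (- t) * c"
      using 3 by (simp add: field_simps)
    moreover have "(- t) * p (inverse (- t) *\<^sub>R y - x0) = p (y + t *\<^sub>R x0)"
      using sublinear_scaleR[OF p, of "- t" "inverse (- t) *\<^sub>R y - x0"] 3
      by (simp add: scaleR_diff_right)
    ultimately show ?thesis by simp
  qed
qed

lemma dominated_linear_graph_extend:
  assumes p: "sublinear p" and M: "dominated_linear_graph p M"
    and c_lower: "\<And>y a. (y, a) \<in> M \<Longrightarrow> a - p (y - x0) \<le> c"
    and c_upper: "\<And>z b. (z, b) \<in> M \<Longrightarrow> c \<le> p (z + x0) - b"
    and x0: "\<And>a. (x0, a) \<notin> M"
  shows "dominated_linear_graph p {(y + t *\<^sub>R x0, a + t * c) | y a t. (y, a) \<in> M}"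
    (is "dominated_linear_graph p ?M'")
  unfolding dominated_linear_graph_def
proof (intro conjI allI impI)
  fix x a b assume "(x, a) \<in> ?M'" "(x, b) \<in> ?M'"
  then obtain y1 a1 t1 y2 a2 t2 where
    1: "x = y1 + t1 *\<^sub>R x0" "a = a1 + t1 * c" "(y1, a1) \<in> M" and
    2: "x = y2 + t2 *\<^sub>R x0" "b = a2 + t2 * c" "(y2, a2) \<in> M"
    by blast
  have "t1 = t2"
  proof (rule ccontr)
    assume "t1 \<noteq> t2"
    have "(y2 + (-1) *\<^sub>R y1, a2 + (-1) * a1) \<in> M"
      using dominated_linear_graph_add[OF M 2(3) dominated_linear_graph_scaleR[OF M 1(3)]] .
    from dominated_linear_graph_scaleR[OF M this, of "1 / (t1 - t2)"]
    have "((1 / (t1 - t2)) *\<^sub>R (y2 - y1), (a2 - a1) / (t1 - t2)) \<in> M" by simp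
    moreover have "y2 - y1 = (t1 - t2) *\<^sub>R x0" using 1(1) 2(1) by (simp add: algebra_simps)
    ultimately show False using x0 \<open>t1 \<noteq> t2\<close> by simp
  qed
  then show "a = b" using 1 2 dominated_linear_graph_unique[OF M] by simp
next
  fix x a y b assume "(x, a) \<in> ?M'" "(y, b) \<in> ?M'"
  then obtain y1 a1 t1 y2 a2 t2 where
    "x = y1 + t1 *\<^sub>R x0" "a = a1 + t1 * c" "(y1, a1) \<in> M"
    "y = y2 + t2 *\<^sub>R x0" "b = a2 + t2 * c" "(y2, a2) \<in> M"
    by blast
  moreover have "x + y = (y1 + y2) + (t1 + t2) *\<^sub>R x0" "a + b = (a1 + a2) + (t1 + t2) * c"
    using calculation by (simp_all add: algebra_simps)
  ultimately show "(x + y, a + b) \<in> ?M'" using dominated_linear_graph_add[OF M] by blast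
next
  fix x a r assume "(x, a) \<in> ?M'"
  then obtain y1 a1 t1 where "x = y1 + t1 *\<^sub>R x0" "a = a1 + t1 * c" "(y1, a1) \<in> M"
    by blast
  moreover have "r *\<^sub>R x = r *\<^sub>R y1 + (r * t1) *\<^sub>R x0" "r * a = r * a1 + (r * t1) * c"
    using calculation by (simp_all add: algebra_simps)
  ultimately show "(r *\<^sub>R x, r * a) \<in> ?M'" using dominated_linear_graph_scaleR[OF M] by blast
next
  fix x a assume "(x, a) \<in> ?M'"
  then show "a \<le> p x"
    using dominated_linear_graph_extension_le[OF p M _ c_lower c_upper] by blast
qed

lemma dominated_linear_graph_maximal_total:
  assumes p: "sublinear p" and M: "dominated_linear_graph p M" "M \<noteq> {}"
    and maximal: "\<And>G. dominated_linear_graph p G \<Longrightarrow> M \<subseteq> G \<Longrightarrow> G = M"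
  shows "\<exists>a. (x0, a) \<in> M"
proof (rule ccontr)
  assume "\<nexists>a. (x0, a) \<in> M"
  then have x0: "\<And>a. (x0, a) \<notin> M" by blast
  obtain c where c: "\<And>y a. (y, a) \<in> M \<Longrightarrow> a - p (y - x0) \<le> c" "\<And>z b. (z, b) \<in> M \<Longrightarrow> c \<le> p (z + x0) - b"
    using dominated_linear_graph_extension_value[OF p M, of x0] by blast
  define M' where "M' = {(y + t *\<^sub>R x0, a + t * c) | y a t. (y, a) \<in> M}"
  have "M \<subseteq> M'"
  proof (rule subrelI)
    fix y a assume "(y, a) \<in> M"
    then show "(y, a) \<in> M'"
      unfolding M'_def by (intro CollectI exI[of _ y] exI[of _ a] exI[of _ "0::real"]) simp
  qed
  with dominated_linear_graph_extend[OF p M(1) c x0] have "M' = M"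
    unfolding M'_def[symmetric] by (rule maximal)
  moreover obtain z b where "(z, b) \<in> M" using M(2) by auto
  then have "(x0, c) \<in> M'"
    unfolding M'_def using dominated_linear_graph_zero[OF M(1)]
    by (intro CollectI exI[of _ 0] exI[of _ "0::real"] exI[of _ "1::real"]) simp
  ultimately show False using x0 by blast
qed

lemma dominated_linear_graph_total_imp_linear:
  assumes M: "dominated_linear_graph p M" and total: "\<And>x. \<exists>a. (x, a) \<in> M"
  obtains \<xi> where "linear \<xi>" "\<And>x. (x, \<xi> x) \<in> M"
proof -
  define \<xi> where "\<xi> x = (THE a. (x, a) \<in> M)" for x
  have \<xi>_eq: "\<xi> x = a" if "(x, a) \<in> M" for x a
    unfolding \<xi>_def by (rule the_equality) (use that dominated_linear_graph_unique[OF M] in blast)+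
  have \<xi>_in: "(x, \<xi> x) \<in> M" for x
    using total[of x] \<xi>_eq by blast
  have "linear \<xi>"
    unfolding linear_iff
    using \<xi>_eq[OF dominated_linear_graph_add[OF M \<xi>_in \<xi>_in]] \<xi>_eq[OF dominated_linear_graph_scaleR[OF M \<xi>_in]]
    by simp
  then show ?thesis using \<xi>_in by (rule that)
qed

lemma hahn_banach_sublinear:
  fixes p :: "'x::real_vector \<Rightarrow> real" and T :: "'v::real_vector \<Rightarrow> 'x"
  assumes T: "linear T" and \<eta>: "linear \<eta>" and p: "sublinear p"
    and dominated: "\<And>u. \<eta> u \<le> p (T u)"
  shows "\<exists>\<xi>. linear \<xi> \<and> (\<forall>u. \<xi> (T u) = \<eta> u) \<and> (\<forall>x. \<xi> x \<le> p x)"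
proof -
  define G0 where "G0 = range (\<lambda>u. (T u, \<eta> u))"
  define \<A> where "\<A> = {G. dominated_linear_graph p G \<and> G0 \<subseteq> G}"
  have "G0 \<in> \<A>"
    unfolding \<A>_def G0_def using dominated_linear_graph_range[OF T \<eta> p dominated] by blast
  have "\<exists>M\<in>\<A>. \<forall>G\<in>\<A>. M \<subseteq> G \<longrightarrow> G = M"
  proof (rule Zorn_Lemma2, intro ballI)
    fix C assume "C \<in> chains \<A>"
    then have "C \<subseteq> \<A>" "chain_subset C" unfolding chains_def by auto
    show "\<exists>U\<in>\<A>. \<forall>G\<in>C. G \<subseteq> U"
    proof (cases "C = {}")
      case True
      then show ?thesis using \<open>G0 \<in> \<A>\<close> by blast
    next
      case False
      have "dominated_linear_graph p (\<Union>C)"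
        using dominated_linear_graph_Union[OF \<open>chain_subset C\<close>] \<open>C \<subseteq> \<A>\<close> unfolding \<A>_def by blast
      moreover have "G0 \<subseteq> \<Union>C" using False \<open>C \<subseteq> \<A>\<close> unfolding \<A>_def by blast
      ultimately have "\<Union>C \<in> \<A>" unfolding \<A>_def by simp
      then show ?thesis by blast
    qed
  qed
  then obtain M where "M \<in> \<A>" and maximal: "\<And>G. G \<in> \<A> \<Longrightarrow> M \<subseteq> G \<Longrightarrow> G = M"
    by blast
  then have M: "dominated_linear_graph p M" "G0 \<subseteq> M" unfolding \<A>_def by simp_all
  have "M \<noteq> {}" using M(2) unfolding G0_def by blast
  have "\<exists>a. (x, a) \<in> M" for x
    using dominated_linear_graph_maximal_total[OF p M(1) \<open>M \<noteq> {}\<close>] maximal M(2) unfolding \<A>_def by blast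
  then obtain \<xi> where "linear \<xi>" and \<xi>: "\<And>x. (x, \<xi> x) \<in> M"
    using dominated_linear_graph_total_imp_linear[OF M(1)] by blast
  moreover have "\<xi> (T u) = \<eta> u" for u
    using dominated_linear_graph_unique[OF M(1) \<xi>] M(2) unfolding G0_def by blast
  moreover have "\<xi> x \<le> p x" for x
    using dominated_linear_graph_le[OF M(1) \<xi>] .
  ultimately show ?thesis by blast
qed

section \<open>Clarke subgradients of a smooth term plus a composed Lipschitz term\<close>

lemma sublinear_clarke_dd:
  assumes "loc_lipschitz g"
  shows "sublinear (\<lambda>v. real_of_ereal (clarke_dd g x v))"
proof -
  obtain L :: real where real: "\<And>v. clarke_dd g x v = ereal (real_of_ereal (clarke_dd g x v))"
    using clarke_dd_real_bounded[OF assms] by blast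
  show ?thesis
    unfolding sublinear_def
  proof (intro conjI allI impI)
    fix u w
    show "real_of_ereal (clarke_dd g x (u + w)) \<le> real_of_ereal (clarke_dd g x u) + real_of_ereal (clarke_dd g x w)"
      using clarke_dd_add_direction_le[OF order_eq_refl[OF real] order_eq_refl[OF real]]
      by (subst (asm) real) simp
  next
    fix c :: real and v assume "c > 0"
    show "real_of_ereal (clarke_dd g x (c *\<^sub>R v)) \<le> c * real_of_ereal (clarke_dd g x v)"
      using clarke_dd_scaleR_le[OF order_eq_refl[OF real] \<open>c > 0\<close>]
      by (subst (asm) real) simp
  qed
qed

lemma linear_le_norm_imp_bounded_linear:
  fixes \<xi> :: "'a::real_normed_vector \<Rightarrow> real"
  assumes "linear \<xi>" "\<And>x. \<xi> x \<le> L * norm x"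
  shows "bounded_linear \<xi>"
proof -
  have "\<bar>\<xi> x\<bar> \<le> norm x * L" for x
    using assms(2)[of x] assms(2)[of "- x"] linear_neg[OF assms(1), of x]
    by (simp add: abs_le_iff mult.commute)
  then show ?thesis
    using assms(1) by (intro bounded_linear_intro[of _ L]) (simp_all add: linear_add linear_scale)
qed

lemma clarke_subdiff_add_compose_subset:
  fixes T :: "'v::real_normed_vector \<Rightarrow>\<^sub>L 'x::real_normed_vector" and l :: "'v \<Rightarrow>\<^sub>L real"
  assumes q: "\<And>u. clarke_dd q v u \<le> ereal (l u)" and G: "loc_lipschitz G"
  shows "clarke_subdiff (\<lambda>y. q y + G (T y)) v \<subseteq> {l + (\<xi> o\<^sub>L T) | \<xi>. \<xi> \<in> clarke_subdiff G (T v)}"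
proof
  fix \<zeta> assume \<zeta>: "\<zeta> \<in> clarke_subdiff (\<lambda>y. q y + G (T y)) v"
  define p where "p z = real_of_ereal (clarke_dd G (T v) z)" for z
  obtain L where real: "\<And>z. clarke_dd G (T v) z = ereal (p z)" and bound: "\<And>z. p z \<le> L * norm z"
    using clarke_dd_real_bounded[OF G] unfolding p_def by blast
  have dominated: "\<zeta> u - l u \<le> p (T u)" for u
  proof -
    have "ereal (\<zeta> u) \<le> clarke_dd (\<lambda>y. q y + G (T y)) v u"
      using \<zeta> unfolding clarke_subdiff_def by blast
    also have "\<dots> \<le> ereal (l u + p (T u))"
      by (rule clarke_dd_add_le[OF q clarke_dd_compose_blinfun_le]) (simp add: real)
    finally show ?thesis by simp
  qed
  have p: "sublinear p"
    unfolding p_def[abs_def] by (rule sublinear_clarke_dd[OF G])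
  have T: "linear (blinfun_apply T)" and \<eta>: "linear (\<lambda>u. \<zeta> u - l u)"
    by (intro linear_compose_sub blinfun.bounded_linear_right[THEN bounded_linear.linear])+
  obtain \<xi> where \<xi>: "linear \<xi>" "\<And>u. \<xi> (T u) = \<zeta> u - l u" "\<And>z. \<xi> z \<le> p z"
    using hahn_banach_sublinear[OF T \<eta> p dominated] by blast
  have "bounded_linear \<xi>"
    using \<xi>(1) by (rule linear_le_norm_imp_bounded_linear) (use \<xi>(3) bound order_trans in blast)
  then have apply_\<xi>: "blinfun_apply (Blinfun \<xi>) = \<xi>"
    by (rule bounded_linear_Blinfun_apply)
  have "Blinfun \<xi> \<in> clarke_subdiff G (T v)"
    unfolding clarke_subdiff_def using \<xi>(3) by (simp add: apply_\<xi> real)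
  moreover have "\<zeta> = l + (Blinfun \<xi> o\<^sub>L T)"
    by (rule blinfun_eqI) (simp add: apply_\<xi> \<xi>(2) plus_blinfun.rep_eq)
  ultimately show "\<zeta> \<in> {l + (\<xi> o\<^sub>L T) | \<xi>. \<xi> \<in> clarke_subdiff G (T v)}" by blast
qed

section \<open>Convexity from ordered Dini derivatives\<close>

lemma exists_right_slope_gt:
  fixes h :: "real \<Rightarrow> real"
  assumes cont: "continuous_on {a..b} h" and "a < b" and gt: "r * (b - a) < h b - h a"
  shows "\<exists>s. a \<le> s \<and> s < b \<and> (\<forall>u. s < u \<and> u \<le> b \<longrightarrow> r * (u - s) < h u - h s)"
proof -
  define \<phi> where "\<phi> u = h u - r * u" for u
  define S where "S = {a..b} \<inter> \<phi> -` {..\<phi> a}"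
  \<comment> \<open>the last point of \<open>[a, b]\<close> at which \<open>\<phi>\<close> has not yet risen above \<open>\<phi> a\<close>\<close>
  have "continuous_on {a..b} \<phi>" unfolding \<phi>_def by (intro continuous_intros cont)
  then have "closed S" unfolding S_def by (rule continuous_closed_preimage) auto
  then have "compact S" unfolding S_def by (simp add: compact_eq_bounded_closed bounded_Int)
  moreover have "a \<in> S" using \<open>a < b\<close> unfolding S_def by simp
  ultimately obtain s where "s \<in> S" and last: "\<And>u. u \<in> S \<Longrightarrow> u \<le> s"
    using compact_attains_sup[of S] by blast
  then have s: "a \<le> s" "s \<le> b" "\<phi> s \<le> \<phi> a" unfolding S_def by auto
  have "s \<noteq> b" using s(3) gt unfolding \<phi>_def by (auto simp: algebra_simps)
  moreover have "r * (u - s) < h u - h s" if "s < u" "u \<le> b" for u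
  proof -
    have "u \<notin> S" using last that(1) by fastforce
    then have "\<phi> a < \<phi> u" using s(1) that unfolding S_def by auto
    then show ?thesis using s(3) unfolding \<phi>_def by (simp add: algebra_simps)
  qed
  ultimately show ?thesis using s by auto
qed

lemma exists_right_slope_lt:
  fixes h :: "real \<Rightarrow> real"
  assumes "continuous_on {a..b} h" and "a < b" and "h b - h a < r * (b - a)"
  shows "\<exists>t. a \<le> t \<and> t < b \<and> (\<forall>u. t < u \<and> u \<le> b \<longrightarrow> h u - h t < r * (u - t))"
proof -
  have "continuous_on {a..b} (\<lambda>u. - h u)" by (intro continuous_intros assms(1))
  from exists_right_slope_gt[OF this \<open>a < b\<close>, of "- r"] assms(3)
  show ?thesis by (simp add: algebra_simps)
qed

lemma slope_le_of_dini_ordered: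
  fixes h :: "real \<Rightarrow> real"
  assumes cont: "continuous_on UNIV h"
    and dini: "\<And>s t. s < t \<Longrightarrow> \<exists>K. \<forall>e>0. \<forall>\<^sub>F \<mu> in at_right 0.
        h (s + \<mu>) - h s \<le> (K + e) * \<mu> \<and> (K - e) * \<mu> \<le> h (t + \<mu>) - h t"
    and "a < m" "m < b"
  shows "(h m - h a) / (m - a) \<le> (h b - h m) / (b - m)"
proof (rule ccontr)
  \<comment> \<open>if the chord slopes decreased, \<open>h\<close> would rise faster than \<open>r1\<close> just right of some \<open>s < m\<close>
    and slower than \<open>r2 < r1\<close> just right of some \<open>t \<ge> m\<close>\<close>
  define s1 s2 where "s1 = (h m - h a) / (m - a)" and "s2 = (h b - h m) / (b - m)"
  assume "\<not> ?thesis"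
  then have "s2 < s1" unfolding s1_def s2_def by simp
  define r1 r2 where "r1 = (3 * s1 + s2) / 4" and "r2 = (s1 + 3 * s2) / 4"
  have "r1 * (m - a) < s1 * (m - a)"
    using \<open>a < m\<close> \<open>s2 < s1\<close> unfolding r1_def by (intro mult_strict_right_mono) simp_all
  also have "\<dots> = h m - h a" using \<open>a < m\<close> unfolding s1_def by simp
  finally have "r1 * (m - a) < h m - h a" .
  then obtain s where s: "s < m" "\<And>u. s < u \<Longrightarrow> u \<le> m \<Longrightarrow> r1 * (u - s) < h u - h s"
    using exists_right_slope_gt[OF continuous_on_subset[OF cont] \<open>a < m\<close>] by blast
  have "h b - h m = s2 * (b - m)" using \<open>m < b\<close> unfolding s2_def by simp
  also have "\<dots> < r2 * (b - m)"
    using \<open>m < b\<close> \<open>s2 < s1\<close> unfolding r2_def by (intro mult_strict_right_mono) simp_all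
  finally have "h b - h m < r2 * (b - m)" .
  then obtain t where t: "m \<le> t" "t < b" "\<And>u. t < u \<Longrightarrow> u \<le> b \<Longrightarrow> h u - h t < r2 * (u - t)"
    using exists_right_slope_lt[OF continuous_on_subset[OF cont] \<open>m < b\<close>] by blast
  obtain K where K: "\<forall>e>0. \<forall>\<^sub>F \<mu> in at_right 0.
      h (s + \<mu>) - h s \<le> (K + e) * \<mu> \<and> (K - e) * \<mu> \<le> h (t + \<mu>) - h t"
    using dini[of s t] s(1) t(1) by auto
  define e where "e = (s1 - s2) / 8"
  have "e > 0" using \<open>s2 < s1\<close> unfolding e_def by simp
  have "\<forall>\<^sub>F \<mu> in at_right 0. h (s + \<mu>) - h s \<le> (K + e) * \<mu> \<and> (K - e) * \<mu> \<le> h (t + \<mu>) - h t"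
    using K \<open>e > 0\<close> by blast
  moreover have "\<forall>\<^sub>F \<mu> in at_right (0::real). 0 < \<mu> \<and> \<mu> < m - s \<and> \<mu> < b - t"
    using s(1) t(2) unfolding eventually_at_right_field by (intro exI[of _ "min (m - s) (b - t)"]) auto
  ultimately have "\<forall>\<^sub>F \<mu> in at_right 0. (h (s + \<mu>) - h s \<le> (K + e) * \<mu> \<and> (K - e) * \<mu> \<le> h (t + \<mu>) - h t)
      \<and> 0 < \<mu> \<and> \<mu> < m - s \<and> \<mu> < b - t"
    by (rule eventually_conj)
  then obtain \<mu> where \<mu>: "h (s + \<mu>) - h s \<le> (K + e) * \<mu>" "(K - e) * \<mu> \<le> h (t + \<mu>) - h t"
    "0 < \<mu>" "\<mu> < m - s" "\<mu> < b - t"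
    using eventually_happens'[OF trivial_limit_at_right_real] by blast
  have "r1 * \<mu> < h (s + \<mu>) - h s" using s(2)[of "s + \<mu>"] \<mu> by simp
  from less_le_trans[OF this \<mu>(1)] have "r1 < K + e" using \<mu>(3) by simp
  have "h (t + \<mu>) - h t < r2 * \<mu>" using t(3)[of "t + \<mu>"] \<mu> by simp
  from le_less_trans[OF \<mu>(2) this] have "K - e < r2" using \<mu>(3) by simp
  with \<open>r1 < K + e\<close> \<open>s2 < s1\<close> show False unfolding r1_def r2_def e_def by (simp add: field_simps)
qed

lemma convex_on_of_dini_ordered:
  fixes h :: "real \<Rightarrow> real"
  assumes cont: "continuous_on UNIV h"
    and dini: "\<And>s t. s < t \<Longrightarrow> \<exists>K. \<forall>e>0. \<forall>\<^sub>F \<mu> in at_right 0.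
        h (s + \<mu>) - h s \<le> (K + e) * \<mu> \<and> (K - e) * \<mu> \<le> h (t + \<mu>) - h t"
  shows "convex_on UNIV h"
proof (rule convex_on_linorderI)
  fix \<theta> x y :: real assume \<theta>: "0 < \<theta>" "\<theta> < 1" and "x < y"
  define m where "m = (1 - \<theta>) * x + \<theta> * y"
  have mx: "m - x = \<theta> * (y - x)" and ym: "y - m = (1 - \<theta>) * (y - x)"
    unfolding m_def by (simp_all add: algebra_simps)
  have "0 < \<theta> * (y - x)" "0 < (1 - \<theta>) * (y - x)" using \<theta> \<open>x < y\<close> by simp_all
  then have "x < m" "m < y" by (simp_all flip: mx ym)
  from slope_le_of_dini_ordered[OF cont dini this]
  have "(h m - h x) / (\<theta> * (y - x)) \<le> (h y - h m) / ((1 - \<theta>) * (y - x))"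
    by (simp only: mx ym)
  then have "(h m - h x) / \<theta> \<le> (h y - h m) / (1 - \<theta>)"
    using \<open>x < y\<close> by (simp add: divide_le_cancel flip: divide_divide_eq_left)
  then have "(1 - \<theta>) * (h m - h x) \<le> \<theta> * (h y - h m)"
    using \<theta> by (simp add: field_simps)
  then show "h ((1 - \<theta>) *\<^sub>R x + \<theta> *\<^sub>R y) \<le> (1 - \<theta>) * h x + \<theta> * h y"
    unfolding m_def by (simp add: algebra_simps)
qed simp

section \<open>Strict convexity of the energy\<close>

lemma dini_bounds_on_line:
  assumes "clarke_dd G (p + s *\<^sub>R d) d \<le> ereal \<alpha>" "clarke_dd G (p + t *\<^sub>R d) (- d) \<le> ereal \<beta>" "e > 0"
  shows "\<forall>\<^sub>F \<mu> in at_right 0. G (p + (s + \<mu>) *\<^sub>R d) - G (p + s *\<^sub>R d) \<le> (\<alpha> + e) * \<mu>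
    \<and> - ((\<beta> + e) * \<mu>) \<le> G (p + (t + \<mu>) *\<^sub>R d) - G (p + t *\<^sub>R d)"
  using eventually_le_of_clarke_dd_le[OF assms(1,3), of 0] eventually_le_of_clarke_dd_le[OF assms(2,3), of d]
  by eventually_elim (simp add: scaleR_add_left add.assoc)

lemma right_differences_add_quadratic:
  fixes g :: "real \<Rightarrow> real"
  assumes upper: "g (s + \<mu>) - g s \<le> (\<alpha> + e) * \<mu>" and lower: "- ((\<beta> + e) * \<mu>) \<le> g (t + \<mu>) - g t"
    and sum: "\<alpha> + \<beta> \<le> c * (t - s)" and small: "\<bar>c\<bar> * \<mu> \<le> e" and "0 < \<mu>"
  shows "g (s + \<mu>) + c / 2 * (s + \<mu>)\<^sup>2 - (g s + c / 2 * s\<^sup>2) \<le> (\<alpha> + c * s + 2 * e) * \<mu>"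
    and "(\<alpha> + c * s - 2 * e) * \<mu> \<le> g (t + \<mu>) + c / 2 * (t + \<mu>)\<^sup>2 - (g t + c / 2 * t\<^sup>2)"
proof -
  have "\<bar>c * \<mu> * \<mu>\<bar> \<le> e * \<mu>"
    using mult_right_mono[OF small, of \<mu>] \<open>0 < \<mu>\<close> by (simp add: abs_mult)
  then have quadratic: "- (e * \<mu>) \<le> c * \<mu> * \<mu>" "c * \<mu> * \<mu> \<le> e * \<mu>"
    unfolding abs_le_iff by linarith+
  have square: "c / 2 * (r + \<mu>)\<^sup>2 - c / 2 * r\<^sup>2 = c * r * \<mu> + c * \<mu> * \<mu> / 2" for r
    by (simp add: power2_eq_square algebra_simps)
  have "\<alpha> * \<mu> + \<beta> * \<mu> \<le> c * t * \<mu> - c * s * \<mu>"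
    using mult_right_mono[OF sum, of \<mu>] \<open>0 < \<mu>\<close> by (simp add: algebra_simps)
  moreover have expand: "(\<alpha> + c * s + 2 * e) * \<mu> = \<alpha> * \<mu> + c * s * \<mu> + 2 * e * \<mu>"
    "(\<alpha> + c * s - 2 * e) * \<mu> = \<alpha> * \<mu> + c * s * \<mu> - 2 * e * \<mu>"
    "(\<alpha> + e) * \<mu> = \<alpha> * \<mu> + e * \<mu>" "(\<beta> + e) * \<mu> = \<beta> * \<mu> + e * \<mu>"
    by (simp_all add: algebra_simps)
  ultimately show "g (s + \<mu>) + c / 2 * (s + \<mu>)\<^sup>2 - (g s + c / 2 * s\<^sup>2) \<le> (\<alpha> + c * s + 2 * e) * \<mu>"
    and "(\<alpha> + c * s - 2 * e) * \<mu> \<le> g (t + \<mu>) + c / 2 * (t + \<mu>)\<^sup>2 - (g t + c / 2 * t\<^sup>2)"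
    using upper lower quadratic square[of s] square[of t] unfolding expand by linarith+
qed

lemma clarke_dd_monotone_on_line:
  fixes G :: "'x::real_normed_vector \<Rightarrow> real"
  assumes G: "loc_lipschitz G"
    and monotone: "\<And>v1 v2. clarke_dd G v1 (v2 - v1) + clarke_dd G v2 (v1 - v2) \<le> ereal (m * (norm (v1 - v2))\<^sup>2)"
    and "s < t"
  obtains \<alpha> \<beta> where "clarke_dd G (p + s *\<^sub>R d) d \<le> ereal \<alpha>" "clarke_dd G (p + t *\<^sub>R d) (- d) \<le> ereal \<beta>"
    "\<alpha> + \<beta> \<le> m * (norm d)\<^sup>2 * (t - s)"
proof -
  define v1 v2 D where "v1 = p + s *\<^sub>R d" and "v2 = p + t *\<^sub>R d" and "D = t - s"
  have "D > 0" using \<open>s < t\<close> unfolding D_def by simp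
  have "v2 - v1 = D *\<^sub>R d" "v1 - v2 = - (D *\<^sub>R d)"
    unfolding v1_def v2_def D_def by (simp_all add: algebra_simps)
  obtain a b where a: "clarke_dd G v1 (D *\<^sub>R d) = ereal a"
    and b: "clarke_dd G v2 (- (D *\<^sub>R d)) = ereal b"
    using clarke_dd_real_bounded[OF G] by metis
  have "ereal (a + b) \<le> ereal (m * (norm (D *\<^sub>R d))\<^sup>2)"
    using monotone[of v1 v2] unfolding \<open>v2 - v1 = _\<close> \<open>v1 - v2 = _\<close> a b by simp
  then have "a + b \<le> m * (norm d)\<^sup>2 * D * D"
    using \<open>D > 0\<close> by (simp add: power2_eq_square algebra_simps)
  then have sum: "a / D + b / D \<le> m * (norm d)\<^sup>2 * D"
    using \<open>D > 0\<close> by (simp add: add_divide_distrib[symmetric] divide_le_eq)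
  have "inverse D > 0" using \<open>D > 0\<close> by simp
  from clarke_dd_scaleR_le[OF order_eq_refl[OF a] this] clarke_dd_scaleR_le[OF order_eq_refl[OF b] this]
  have "clarke_dd G v1 d \<le> ereal (a / D)" "clarke_dd G v2 (- d) \<le> ereal (b / D)"
    using \<open>D > 0\<close> by (simp_all add: field_simps)
  with sum show ?thesis using that unfolding v1_def v2_def D_def by blast
qed

lemma convex_on_line_add_quadratic:
  fixes G :: "'x::real_normed_vector \<Rightarrow> real"
  assumes G: "loc_lipschitz G"
    and monotone: "\<And>v1 v2. clarke_dd G v1 (v2 - v1) + clarke_dd G v2 (v1 - v2) \<le> ereal (m * (norm (v1 - v2))\<^sup>2)"
  shows "convex_on UNIV (\<lambda>\<tau>. G (p + \<tau> *\<^sub>R d) + m * (norm d)\<^sup>2 / 2 * \<tau>\<^sup>2)"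
proof (rule convex_on_of_dini_ordered)
  define c where "c = m * (norm d)\<^sup>2"
  have "continuous_on UNIV G"
    using loc_lipschitz_imp_isCont[OF G] by (simp add: continuous_at_imp_continuous_on)
  then show "continuous_on UNIV (\<lambda>\<tau>. G (p + \<tau> *\<^sub>R d) + m * (norm d)\<^sup>2 / 2 * \<tau>\<^sup>2)"
    by (intro continuous_intros continuous_on_compose2[OF \<open>continuous_on UNIV G\<close>]) auto
  fix s t :: real assume "s < t"
  obtain \<alpha> \<beta> where \<alpha>: "clarke_dd G (p + s *\<^sub>R d) d \<le> ereal \<alpha>" and \<beta>: "clarke_dd G (p + t *\<^sub>R d) (- d) \<le> ereal \<beta>"
    and "\<alpha> + \<beta> \<le> c * (t - s)"
    using clarke_dd_monotone_on_line[OF G monotone \<open>s < t\<close>] unfolding c_def by blast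
  show "\<exists>K. \<forall>e>0. \<forall>\<^sub>F \<mu> in at_right 0.
      G (p + (s + \<mu>) *\<^sub>R d) + m * (norm d)\<^sup>2 / 2 * (s + \<mu>)\<^sup>2 - (G (p + s *\<^sub>R d) + m * (norm d)\<^sup>2 / 2 * s\<^sup>2) \<le> (K + e) * \<mu> \<and>
      (K - e) * \<mu> \<le> G (p + (t + \<mu>) *\<^sub>R d) + m * (norm d)\<^sup>2 / 2 * (t + \<mu>)\<^sup>2 - (G (p + t *\<^sub>R d) + m * (norm d)\<^sup>2 / 2 * t\<^sup>2)"
  proof (intro exI allI impI)
    fix e :: real assume "e > 0"
    have "((\<lambda>\<mu>. \<bar>c\<bar> * \<mu>) \<longlongrightarrow> \<bar>c\<bar> * 0) (at_right 0)" by (intro tendsto_intros)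
    from order_tendstoD(2)[OF this, of "e / 2"] \<open>e > 0\<close>
    have "\<forall>\<^sub>F \<mu> in at_right 0. \<bar>c\<bar> * \<mu> < e / 2" by simp
    with dini_bounds_on_line[OF \<alpha> \<beta> half_gt_zero[OF \<open>e > 0\<close>]] eventually_at_right_less[of "0::real"]
    show "\<forall>\<^sub>F \<mu> in at_right 0.
      G (p + (s + \<mu>) *\<^sub>R d) + m * (norm d)\<^sup>2 / 2 * (s + \<mu>)\<^sup>2 - (G (p + s *\<^sub>R d) + m * (norm d)\<^sup>2 / 2 * s\<^sup>2) \<le> (\<alpha> + c * s + e) * \<mu> \<and>
      (\<alpha> + c * s - e) * \<mu> \<le> G (p + (t + \<mu>) *\<^sub>R d) + m * (norm d)\<^sup>2 / 2 * (t + \<mu>)\<^sup>2 - (G (p + t *\<^sub>R d) + m * (norm d)\<^sup>2 / 2 * t\<^sup>2)"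
    proof eventually_elim
      case (elim \<mu>)
      then have "G (p + (s + \<mu>) *\<^sub>R d) - G (p + s *\<^sub>R d) \<le> (\<alpha> + e / 2) * \<mu>"
        "- ((\<beta> + e / 2) * \<mu>) \<le> G (p + (t + \<mu>) *\<^sub>R d) - G (p + t *\<^sub>R d)"
        by blast+
      from right_differences_add_quadratic[OF this \<open>\<alpha> + \<beta> \<le> c * (t - s)\<close> less_imp_le[OF elim(3)] elim(2)]
      show ?case unfolding c_def by simp
    qed
  qed
qed

lemma convex_add_square_strict:
  fixes h :: "real \<Rightarrow> real"
  assumes "convex_on UNIV h" "0 < a" "0 < \<theta>" "\<theta> < 1"
  shows "b0 + b1 * \<theta> + a * \<theta>\<^sup>2 + h \<theta> < (1 - \<theta>) * (b0 + h 0) + \<theta> * (b0 + b1 + a + h 1)"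
proof -
  have "h ((1 - \<theta>) *\<^sub>R 0 + \<theta> *\<^sub>R 1) \<le> (1 - \<theta>) * h 0 + \<theta> * h 1"
    using assms by (intro convex_onD) auto
  moreover have "0 < a * (\<theta> - \<theta>\<^sup>2)"
    using assms by (intro mult_pos_pos) (simp_all add: power2_eq_square)
  moreover have "(1 - \<theta>) * (b0 + h 0) + \<theta> * (b0 + b1 + a + h 1) - (b0 + b1 * \<theta> + a * \<theta>\<^sup>2 + h \<theta>)
      = a * (\<theta> - \<theta>\<^sup>2) + ((1 - \<theta>) * h 0 + \<theta> * h 1 - h \<theta>)"
    by (simp add: power2_eq_square algebra_simps)
  ultimately show ?thesis by simp
qed

lemma strictly_convex_quadratic_add_compose:
  fixes A :: "'v::real_normed_vector \<Rightarrow>\<^sub>L ('v \<Rightarrow>\<^sub>L real)" and f :: "'v \<Rightarrow>\<^sub>L real"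
    and \<gamma> :: "'v \<Rightarrow>\<^sub>L 'x::real_normed_vector" and G :: "'x \<Rightarrow> real"
  assumes sym: "\<And>u v. A u v = A v u"
    and coercive: "\<And>u. m_A * (norm u)\<^sup>2 \<le> A u u"
    and G: "loc_lipschitz G"
    and monotone: "\<And>v1 v2. clarke_dd G v1 (v2 - v1) + clarke_dd G v2 (v1 - v2) \<le> ereal (m * (norm (v1 - v2))\<^sup>2)"
    and "m \<ge> 0" and gap: "m * (norm \<gamma>)\<^sup>2 < m_A"
  shows "strictly_convex (\<lambda>v. 1/2 * A v v - f v + G (\<gamma> v))"
  unfolding strictly_convex_def
proof (intro allI impI, elim conjE)
  fix x y :: 'v and \<theta> :: real assume "x \<noteq> y" "0 < \<theta>" "\<theta> < 1"
  define L where "L v = 1/2 * A v v - f v + G (\<gamma> v)" for v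
  define e where "e = y - x"
  define c where "c = m * (norm (\<gamma> e))\<^sup>2"
  define h where "h \<tau> = G (\<gamma> x + \<tau> *\<^sub>R \<gamma> e) + c / 2 * \<tau>\<^sup>2" for \<tau>
  define b0 b1 a where "b0 = 1/2 * A x x - f x" and "b1 = A x e - f e" and "a = A e e / 2 - c / 2"
  \<comment> \<open>of the curvature \<open>A e e\<close> of the quadratic part along the line, \<open>c\<close> is spent on making \<open>h\<close> convex\<close>
  have line: "L (x + \<tau> *\<^sub>R e) = b0 + b1 * \<tau> + a * \<tau>\<^sup>2 + h \<tau>" for \<tau>
    unfolding L_def h_def b0_def b1_def a_def using sym[of e x]
    by (simp add: blinfun.bilinear_simps power2_eq_square algebra_simps)
  have "convex_on UNIV h"
    using convex_on_line_add_quadratic[OF G monotone, of "\<gamma> x" "\<gamma> e"] unfolding h_def c_def by simp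
  moreover have "c < A e e"
  proof -
    have "e \<noteq> 0" using \<open>x \<noteq> y\<close> unfolding e_def by simp
    have "c \<le> m * ((norm \<gamma>)\<^sup>2 * (norm e)\<^sup>2)"
      unfolding c_def using \<open>m \<ge> 0\<close> norm_blinfun[of \<gamma> e]
      by (intro mult_left_mono) (auto simp flip: power_mult_distrib intro: power_mono)
    also have "\<dots> < m_A * (norm e)\<^sup>2"
      using gap \<open>e \<noteq> 0\<close> by (simp add: mult.assoc[symmetric])
    also have "\<dots> \<le> A e e" by (rule coercive)
    finally show ?thesis .
  qed
  ultimately have "b0 + b1 * \<theta> + a * \<theta>\<^sup>2 + h \<theta> < (1 - \<theta>) * (b0 + h 0) + \<theta> * (b0 + b1 + a + h 1)"
    using \<open>0 < \<theta>\<close> \<open>\<theta> < 1\<close> unfolding a_def by (intro convex_add_square_strict) simp_all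
  moreover have "L ((1 - \<theta>) *\<^sub>R x + \<theta> *\<^sub>R y) = b0 + b1 * \<theta> + a * \<theta>\<^sup>2 + h \<theta>"
    using line[of \<theta>] unfolding e_def by (simp add: algebra_simps)
  moreover have "L x = b0 + h 0" "L y = b0 + b1 + a + h 1"
    using line[of 0] line[of 1] unfolding e_def by simp_all
  ultimately show "L ((1 - \<theta>) *\<^sub>R x + \<theta> *\<^sub>R y) < (1 - \<theta>) * L x + \<theta> * L y"
    by simp
qed

theorem lemma2:
  fixes \<gamma> :: "'v::banach \<Rightarrow>\<^sub>L 'x::banach"
    and A :: "'v \<Rightarrow>\<^sub>L ('v \<Rightarrow>\<^sub>L real)"
    and J :: "'x \<Rightarrow> 'x \<Rightarrow> real"
    and f :: "'v \<Rightarrow>\<^sub>L real"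
    and m_A c0 c1 c2 m_\<alpha> m_L :: real
    and \<L> :: "'v \<Rightarrow> 'v \<Rightarrow> real"
  assumes refl: "reflexive_space TYPE('v)"
    and A2: "\<forall>u v. blinfun_apply (blinfun_apply A u) v = blinfun_apply (blinfun_apply A v) u"
    and A3: "m_A > 0" "\<forall>u. blinfun_apply (blinfun_apply A u) u \<ge> m_A * (norm u)\<^sup>2"
    and J1: "\<forall>w. loc_lipschitz (J w)"
    and J2: "c0 \<ge> 0" "c1 \<ge> 0" "c2 \<ge> 0"
      "\<forall>w v. \<forall>\<xi>\<in>clarke_subdiff (J w) v. norm \<xi> \<le> c0 + c1 * norm v + c2 * norm w"
    and J3: "m_\<alpha> \<ge> 0" "m_L \<ge> 0"
      "\<forall>w1 w2 v1 v2. clarke_dd (J w1) v1 (v2 - v1) + clarke_dd (J w2) v2 (v1 - v2)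
          \<le> ereal (m_\<alpha> * (norm (v1 - v2))\<^sup>2 + m_L * norm (w1 - w2) * norm (v1 - v2))"
    and S: "m_A > (m_\<alpha> + m_L) * (norm \<gamma>)\<^sup>2"
    and L_def: "\<forall>w v. \<L> w v = 1/2 * blinfun_apply (blinfun_apply A v) v - blinfun_apply f v + J (blinfun_apply \<gamma> w) (blinfun_apply \<gamma> v)"
  shows "(\<forall>w. loc_lipschitz (\<L> w))
       \<and> (\<forall>w v. clarke_subdiff (\<L> w) v \<subseteq>
              {blinfun_apply A v - f + (\<xi> o\<^sub>L \<gamma>) | \<xi>. \<xi> \<in> clarke_subdiff (J (blinfun_apply \<gamma> w)) (blinfun_apply \<gamma> v)})
       \<and> (\<forall>w. strictly_convex (\<L> w))"
proof -
  have sym: "\<And>u v. A u v = A v u" using A2 by blast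
  have \<L>: "\<L> w = (\<lambda>v. 1/2 * A v v - f v + J (\<gamma> w) (\<gamma> v))" for w
    using L_def by (simp add: fun_eq_iff)
  have J: "loc_lipschitz (J w)" for w using J1 by blast
  have monotone: "clarke_dd (J w) v1 (v2 - v1) + clarke_dd (J w) v2 (v1 - v2) \<le> ereal (m_\<alpha> * (norm (v1 - v2))\<^sup>2)"
    for w v1 v2 using J3(3)[THEN spec[of _ w], THEN spec[of _ w], THEN spec[of _ v1], THEN spec[of _ v2]] by simp
  have gap: "m_\<alpha> * (norm \<gamma>)\<^sup>2 < m_A"
    using S mult_nonneg_nonneg[OF J3(2) zero_le_power2[of "norm \<gamma>"]] by (simp add: distrib_right)
  show ?thesis
  proof (intro conjI allI)
    fix w
    show "loc_lipschitz (\<L> w)"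
      unfolding \<L> by (intro loc_lipschitz_add loc_lipschitz_quadratic loc_lipschitz_compose_blinfun J)
  next
    fix w v
    show "clarke_subdiff (\<L> w) v \<subseteq> {A v - f + (\<xi> o\<^sub>L \<gamma>) | \<xi>. \<xi> \<in> clarke_subdiff (J (\<gamma> w)) (\<gamma> v)}"
      unfolding \<L> using clarke_dd_quadratic[OF sym, of f v]
      by (intro clarke_subdiff_add_compose_subset[OF _ J]) (simp add: minus_blinfun.rep_eq)
  next
    fix w
    show "strictly_convex (\<L> w)"
      unfolding \<L> using A3(2) by (intro strictly_convex_quadratic_add_compose[OF sym _ J monotone J3(1) gap]) auto
  qed
qed

end
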